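(* Let $\mathbf{X}\in\mathbb{R}^{m\times n}_+$ be a nonnegative matrix with no zero row and no zero column, and let $\mathbf{x}_1,\dots,\mathbf{x}_m\in\mathbb{R}^n_+$ be the columns of $\mathbf{X}^\top$ (the rows of $\mathbf{X}$). Let $\mathbf{U}^\star=[\mathbf{u}_1,\dots,\mathbf{u}_c]\in\mathbb{R}^{n\times c}$ be the matrix whose columns are generators of the (pairwise distinct) extreme rays of $\operatorname{cone}(\mathbf{X}^\top)$, and let $\boldsymbol{\mu}=\frac{1}{m}\sum_{i=1}^m\mathbf{x}_i$. If $c\ge 2$, then for every $k\in\{1,\dots,c\}$ there is no scalar $\tau$ with $\boldsymbol{\mu}=\tau\,\mathbf{u}_k$; i.e. no extreme ray of $\operatorname{cone}(\mathbf{X}^\top)$ is colinear with the mean $\boldsymbol{\mu}$.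
   Context: $\operatorname{cone}(\mathbf{X}^\top):=\{\mathbf{X}^\top\boldsymbol{\alpha}:\boldsymbol{\alpha}\ge 0\}\subseteq\mathbb{R}^n$. A ray $\mathbb{R}_+\mathbf{u}\subseteq\operatorname{cone}(\mathbf{X}^\top)$ (with $\mathbf{u}\neq 0$) is extreme if whenever $\mathbf{u}=\mathbf{v}+\mathbf{w}$ with $\mathbf{v},\mathbf{w}\in\operatorname{cone}(\mathbf{X}^\top)$, then $\mathbf{v}=a\mathbf{u}$ and $\mathbf{w}=b\mathbf{u}$ for some $a,b\ge 0$. *)

theory Defs
  imports "HOL-Analysis.Analysis"
begin

text \<open>The rows of the m-by-n matrix X are the vectors x i, i < m, in R^n.
  cone(X^T) is the set of nonnegative combinations of these rows.\<close>

definition row_cone :: "nat \<Rightarrow> (nat \<Rightarrow> real^'n) \<Rightarrow> (real^'n) set" where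
  "row_cone m x = {(\<Sum>i<m. a i *\<^sub>R x i) | a. \<forall>i<m. a i \<ge> 0}"

definition extreme_ray :: "(real^'n) set \<Rightarrow> real^'n \<Rightarrow> bool" where
  "extreme_ray K u \<longleftrightarrow> u \<noteq> 0 \<and> {t *\<^sub>R u | t. t \<ge> 0} \<subseteq> K \<and>
     (\<forall>v w. v \<in> K \<and> w \<in> K \<and> u = v + w \<longrightarrow>
        (\<exists>a b. a \<ge> 0 \<and> b \<ge> 0 \<and> v = a *\<^sub>R u \<and> w = b *\<^sub>R u))"

definition same_ray :: "real^'n \<Rightarrow> real^'n \<Rightarrow> bool" where
  "same_ray u v \<longleftrightarrow> (\<exists>t>0. v = t *\<^sub>R u)"

end

theory Submission
  imports Defs
begin

text \<open>If the mean of the rows were a multiple \<open>\<tau> u\<^sub>k\<close> of an extreme generator,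
  then \<open>\<tau> > 0\<close> (the mean has a positive entry in every coordinate, while \<open>u\<^sub>k\<close> lies in
  the nonnegative orthant), so \<open>u\<^sub>k\<close> is a combination of all rows with positive
  coefficients. Extremality splits off each row, forcing every row, hence the whole
  cone, onto the ray of \<open>u\<^sub>k\<close>. Then the cone has a single extreme ray, contradicting
  \<open>c \<ge> 2\<close>.\<close>

lemma in_row_cone: "\<forall>i<m. a i \<ge> 0 \<Longrightarrow> (\<Sum>i<m. a i *\<^sub>R x i) \<in> row_cone m x"
  unfolding row_cone_def by blast

lemma extreme_ray_in_cone:
  assumes "extreme_ray K u"
  shows "u \<in> K"
proof -
  have "{t *\<^sub>R u |t. t \<ge> 0} \<subseteq> K" using assms unfolding extreme_ray_def by blast
  moreover have "u \<in> {t *\<^sub>R u |t. t \<ge> 0}" by (rule CollectI, rule exI[of _ 1]) simp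
  ultimately show ?thesis by blast
qed

lemma row_cone_nonneg:
  assumes "\<forall>i<m. \<forall>j. x i $ j \<ge> 0" "v \<in> row_cone m x"
  shows "v $ j \<ge> 0"
proof -
  obtain a where a: "\<forall>i<m. a i \<ge> 0" "v = (\<Sum>i<m. a i *\<^sub>R x i)"
    using assms(2) unfolding row_cone_def by blast
  have "v $ j = (\<Sum>i<m. a i * x i $ j)" using a(2) by (simp add: sum_component)
  also have "\<dots> \<ge> 0" using a(1) assms(1) by (intro sum_nonneg) simp
  finally show ?thesis .
qed

lemma sum_rows_component_pos:
  fixes x :: "nat \<Rightarrow> real^'n"
  assumes "\<forall>i<m. \<forall>j. x i $ j \<ge> 0" "\<exists>i<m. x i $ j \<noteq> 0"
  shows "(\<Sum>i<m. x i) $ j > 0"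
proof -
  obtain i0 where i0: "i0 < m" "x i0 $ j \<noteq> 0" using assms(2) by blast
  moreover have "x i0 $ j \<ge> 0" using i0(1) assms(1) by blast
  ultimately have "x i0 $ j > 0" by linarith
  also have "x i0 $ j \<le> (\<Sum>i<m. x i $ j)"
    using i0 assms(1) by (intro member_le_sum) auto
  finally show ?thesis by (simp add: sum_component)
qed

lemma mean_rows_eq_scaleR_coeff_pos:
  fixes x :: "nat \<Rightarrow> real^'n"
  assumes nonneg: "\<forall>i<m. \<forall>j. x i $ j \<ge> 0" and no_zero_col: "\<forall>j. \<exists>i<m. x i $ j \<noteq> 0"
    and "u \<in> row_cone m x" and mean: "(1 / real m) *\<^sub>R (\<Sum>i<m. x i) = \<tau> *\<^sub>R u"
  shows "\<tau> > 0"
proof -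
  obtain j :: 'n where True by simp
  have sum_pos: "(\<Sum>i<m. x i) $ j > 0"
    by (rule sum_rows_component_pos[OF nonneg no_zero_col[rule_format]])
  then have "m > 0" by (cases m) auto
  then have "((1 / real m) *\<^sub>R (\<Sum>i<m. x i)) $ j > 0" using sum_pos by simp
  then have "\<tau> * u $ j > 0" using mean by simp
  moreover have "u $ j \<ge> 0" using row_cone_nonneg[OF nonneg \<open>u \<in> row_cone m x\<close>] .
  ultimately show "\<tau> > 0" by (auto simp: zero_less_mult_iff)
qed

lemma extreme_ray_row_on_ray:
  assumes ext: "extreme_ray (row_cone m x) u"
    and u: "u = (\<Sum>i<m. a i *\<^sub>R x i)" and pos: "\<forall>i<m. a i > 0" and i: "i < m"
  shows "\<exists>b\<ge>0. x i = b *\<^sub>R u"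
proof -
  define v where "v = (\<Sum>j<m. (if j = i then a j else 0) *\<^sub>R x j)"
  define w where "w = (\<Sum>j<m. (if j = i then 0 else a j) *\<^sub>R x j)"
  have "v \<in> row_cone m x" "w \<in> row_cone m x"
    unfolding v_def w_def using pos by (auto intro!: in_row_cone simp: less_imp_le)
  moreover have "u = v + w"
    unfolding u v_def w_def sum.distrib[symmetric] scaleR_add_left[symmetric]
    by (intro sum.cong) auto
  ultimately obtain t where t: "t \<ge> 0" "v = t *\<^sub>R u"
    using ext unfolding extreme_ray_def by blast
  have "v = a i *\<^sub>R x i"
    unfolding v_def using i by (simp add: if_distrib[of "\<lambda>t. t *\<^sub>R _"] cong: if_cong)
  have "a i \<noteq> 0" using pos i by auto
  then have "x i = (1 / a i) *\<^sub>R (a i *\<^sub>R x i)" by simp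
  also have "\<dots> = (1 / a i) *\<^sub>R (t *\<^sub>R u)" using \<open>v = a i *\<^sub>R x i\<close> t(2) by simp
  also have "\<dots> = (t / a i) *\<^sub>R u" by simp
  finally have "x i = (t / a i) *\<^sub>R u" .
  then show ?thesis using t pos i by (intro exI[of _ "t / a i"]) (simp add: divide_nonneg_pos)
qed

lemma row_cone_subset_ray:
  assumes "\<forall>i<m. \<exists>b\<ge>0. x i = b *\<^sub>R u" "v \<in> row_cone m x"
  shows "\<exists>t\<ge>0. v = t *\<^sub>R u"
proof -
  obtain b where b: "\<forall>i<m. b i \<ge> 0 \<and> x i = b i *\<^sub>R u" using assms(1) by metis
  obtain a where a: "\<forall>i<m. a i \<ge> 0" "v = (\<Sum>i<m. a i *\<^sub>R x i)"
    using assms(2) unfolding row_cone_def by blast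
  have "v = (\<Sum>i<m. (a i * b i) *\<^sub>R u)" unfolding a(2) using b by (intro sum.cong) auto
  also have "\<dots> = (\<Sum>i<m. a i * b i) *\<^sub>R u" by (simp add: scaleR_sum_left)
  moreover have "(\<Sum>i<m. a i * b i) \<ge> 0" using a(1) b by (intro sum_nonneg) simp
  ultimately show ?thesis by blast
qed

lemma extreme_ray_on_ray_same_ray:
  assumes "extreme_ray K v" "t \<ge> 0" "v = t *\<^sub>R u"
  shows "same_ray u v"
proof -
  have "t \<noteq> 0" using assms unfolding extreme_ray_def by auto
  then show ?thesis using assms(2,3) unfolding same_ray_def by (intro exI[of _ t]) simp
qed

theorem lemma4p1:
  fixes m c :: nat
    and x :: "nat \<Rightarrow> real^'n"
    and u :: "nat \<Rightarrow> real^'n"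
  assumes nonneg: "\<forall>i<m. \<forall>j. x i $ j \<ge> 0"
    and no_zero_row: "\<forall>i<m. x i \<noteq> 0"
    and no_zero_col: "\<forall>j. \<exists>i<m. x i $ j \<noteq> 0"
    and gens_extreme: "\<forall>k<c. extreme_ray (row_cone m x) (u k)"
    and gens_distinct: "\<forall>k<c. \<forall>l<c. k \<noteq> l \<longrightarrow> \<not> same_ray (u k) (u l)"
    and gens_all: "\<forall>v. extreme_ray (row_cone m x) v \<longrightarrow> (\<exists>k<c. same_ray (u k) v)"
    and c2: "c \<ge> 2"
  shows "\<forall>k<c. \<not> (\<exists>\<tau>::real. (1 / real m) *\<^sub>R (\<Sum>i<m. x i) = \<tau> *\<^sub>R u k)"
proof (intro allI impI notI, elim exE)
  fix k \<tau> assume k: "k < c" and mean: "(1 / real m) *\<^sub>R (\<Sum>i<m. x i) = \<tau> *\<^sub>R u k"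
  have ext: "extreme_ray (row_cone m x) (u k)" using gens_extreme k by blast
  have "\<tau> > 0"
    using mean_rows_eq_scaleR_coeff_pos[OF nonneg no_zero_col extreme_ray_in_cone[OF ext] mean] .
  have "u k = (1 / \<tau>) *\<^sub>R ((1 / real m) *\<^sub>R (\<Sum>i<m. x i))" using mean \<open>\<tau> > 0\<close> by simp
  then have uk_rows: "u k = (\<Sum>i<m. (1 / (\<tau> * real m)) *\<^sub>R x i)" by (simp add: scaleR_sum_right)
  have rows_on_ray: "\<forall>i<m. \<exists>b\<ge>0. x i = b *\<^sub>R u k"
    using \<open>\<tau> > 0\<close> by (intro allI impI extreme_ray_row_on_ray[OF ext uk_rows]) auto
  obtain l where l: "l < c" "l \<noteq> k" using c2 k by (intro that[of "if k = 0 then 1 else 0"]) auto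
  have extl: "extreme_ray (row_cone m x) (u l)" using gens_extreme l by blast
  then obtain t where "t \<ge> 0" "u l = t *\<^sub>R u k"
    using row_cone_subset_ray[OF rows_on_ray extreme_ray_in_cone] by blast
  with extl have "same_ray (u k) (u l)" by (rule extreme_ray_on_ray_same_ray)
  then show False using gens_distinct k l by blast
qed

end
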